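(* Let $\lambda\in\mathbb{R}$ and define, for $x>0$, $$f_\lambda(x)=[\psi'(x)]^2+\psi''(x)-\frac{x^2+\lambda x+12}{12x^4(x+1)^2}.$$ Then $f_\lambda$ is completely monotonic on $(0,\infty)$ if and only if $\lambda\le 0$.
   Context: $\Gamma$ is Euler's gamma function, $\psi=\Gamma'/\Gamma$ is the digamma function, and $\psi',\psi''$ are its first and second derivatives (tri- and tetragamma functions). A function $f$ is completely monotonic on an interval $I$ if $f$ has derivatives of all orders on $I$ and $0\le(-1)^n f^{(n)}(x)<\infty$ for all $x\in I$ and all integers $n\ge0$. *)

theory Defs
  imports "HOL-Analysis.Analysis"
begin

definition completely_monotonic_on :: "(real \<Rightarrow> real) \<Rightarrow> real set \<Rightarrow> bool" where
  "completely_monotonic_on f I \<longleftrightarrow>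
     (\<exists>D :: nat \<Rightarrow> real \<Rightarrow> real.
        (\<forall>x\<in>I. D 0 x = f x) \<and>
        (\<forall>n. \<forall>x\<in>I. (D n has_real_derivative D (Suc n) x) (at x)) \<and>
        (\<forall>n. \<forall>x\<in>I. 0 \<le> (-1) ^ n * D n x))"

definition f_lambda :: "real \<Rightarrow> real \<Rightarrow> real" where
  "f_lambda lam x = (Polygamma 1 x)\<^sup>2 + Polygamma 2 x
      - (x\<^sup>2 + lam * x + 12) / (12 * x ^ 4 * (x + 1)\<^sup>2)"

end

theory Submission
  imports Defs
begin

text \<open>
  A function on \<open>(0,\<infinity>)\<close> is handled together with the sequence of all its derivatives.
  Such sequences with alternating signs are closed under sums, nonnegative multiples, shifts
  and Leibniz products, and contain \<open>x\<^sup>-\<^sup>k\<close>. If \<open>F\<close> and all its derivatives vanish at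
  \<open>+\<infinity>\<close>, then \<open>F(x) = \<Sum>\<^sub>N (F(x+N) - F(x+N+1))\<close>, so \<open>F\<close> is completely monotonic as soon as
  \<open>F(x) - F(x+1)\<close> is. This is applied first to \<open>\<psi>'(x) - P(x)\<close> with
  \<open>P(x) = 1/x + 1/(2x\<^sup>2) + 1/(6x\<^sup>3) - 1/(30x\<^sup>5)\<close>, whose difference is a rational function with
  positive coefficients, and then to \<open>f\<^sub>0\<close>, whose difference is \<open>2(\<psi>'(x+1) - P(x+1))/x\<^sup>2\<close> plus
  a positive combination of products of powers of \<open>1/x\<close>, \<open>1/(x+1)\<close>, \<open>1/(x+2)\<close>.
  Since \<open>f\<^sub>\<lambda> = f\<^sub>0 - \<lambda>/(12 x\<^sup>3 (x+1)\<^sup>2)\<close>, this gives sufficiency; necessity follows from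
  \<open>x\<^sup>3 f\<^sub>\<lambda>(x) \<longrightarrow> -\<lambda>/12\<close> as \<open>x \<longrightarrow> 0\<^sup>+\<close>.
\<close>

subsection \<open>Derivative sequences\<close>

definition deriv_seq :: "(nat \<Rightarrow> real \<Rightarrow> real) \<Rightarrow> bool" where
  "deriv_seq D \<longleftrightarrow> (\<forall>n. \<forall>x>0. (D n has_real_derivative D (Suc n) x) (at x))"

definition cm_seq :: "(nat \<Rightarrow> real \<Rightarrow> real) \<Rightarrow> bool" where
  "cm_seq D \<longleftrightarrow> (\<forall>n. \<forall>x>0. 0 \<le> (-1) ^ n * D n x)"

text \<open>Limits are only taken along \<open>x + N\<close>, which is all the telescoping argument needs.\<close>

definition vanishing_seq :: "(nat \<Rightarrow> real \<Rightarrow> real) \<Rightarrow> bool" where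
  "vanishing_seq D \<longleftrightarrow> (\<forall>n. \<forall>x>0. (\<lambda>N. D n (x + real N)) \<longlonglongrightarrow> 0)"

definition seq_add :: "(nat \<Rightarrow> real \<Rightarrow> real) \<Rightarrow> (nat \<Rightarrow> real \<Rightarrow> real) \<Rightarrow> nat \<Rightarrow> real \<Rightarrow> real" where
  "seq_add A B n x = A n x + B n x"

definition seq_scale :: "real \<Rightarrow> (nat \<Rightarrow> real \<Rightarrow> real) \<Rightarrow> nat \<Rightarrow> real \<Rightarrow> real" where
  "seq_scale c A n x = c * A n x"

definition seq_shift :: "real \<Rightarrow> (nat \<Rightarrow> real \<Rightarrow> real) \<Rightarrow> nat \<Rightarrow> real \<Rightarrow> real" where
  "seq_shift c A n x = A n (x + c)"

definition seq_mult :: "(nat \<Rightarrow> real \<Rightarrow> real) \<Rightarrow> (nat \<Rightarrow> real \<Rightarrow> real) \<Rightarrow> nat \<Rightarrow> real \<Rightarrow> real" where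
  "seq_mult A B n x = (\<Sum>k\<le>n. real (n choose k) * A k x * B (n - k) x)"

definition inverse_power_seq :: "nat \<Rightarrow> nat \<Rightarrow> real \<Rightarrow> real" where
  "inverse_power_seq k n x = (-1) ^ n * pochhammer (real k) n / x ^ (k + n)"

definition polygamma_seq :: "nat \<Rightarrow> nat \<Rightarrow> real \<Rightarrow> real" where
  "polygamma_seq m n x = Polygamma (m + n) x"

lemma seq_add_apply [simp]: "seq_add A B n x = A n x + B n x"
  by (simp add: seq_add_def)

lemma seq_scale_apply [simp]: "seq_scale c A n x = c * A n x"
  by (simp add: seq_scale_def)

lemma seq_shift_apply [simp]: "seq_shift c A n x = A n (x + c)"
  by (simp add: seq_shift_def)

lemma seq_mult_0 [simp]: "seq_mult A B 0 x = A 0 x * B 0 x"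
  by (simp add: seq_mult_def)

lemma inverse_power_seq_0 [simp]: "inverse_power_seq k 0 x = 1 / x ^ k"
  by (simp add: inverse_power_seq_def)

lemma polygamma_seq_0 [simp]: "polygamma_seq m 0 x = Polygamma m x"
  by (simp add: polygamma_seq_def)

lemma completely_monotonic_on_seq:
  assumes "deriv_seq D" "cm_seq D" "\<And>x. x > 0 \<Longrightarrow> D 0 x = f x"
  shows "completely_monotonic_on f {0<..}"
  unfolding completely_monotonic_on_def
proof (intro exI[of _ D] conjI ballI allI)
  fix n and x :: real
  assume "x \<in> {0<..}"
  then show "D 0 x = f x" "(D n has_real_derivative D (Suc n) x) (at x)" "0 \<le> (-1) ^ n * D n x"
    using assms unfolding deriv_seq_def cm_seq_def by auto
qed

lemma completely_monotonic_on_nonneg: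
  assumes "completely_monotonic_on f I" "x \<in> I"
  shows "0 \<le> f x"
proof -
  obtain D where "\<forall>y\<in>I. D 0 y = f y" "\<forall>n. \<forall>y\<in>I. 0 \<le> (-1) ^ n * D n y"
    using assms(1) unfolding completely_monotonic_on_def by blast
  then have "D 0 x = f x" "0 \<le> (-1) ^ 0 * D 0 x"
    using assms(2) by blast+
  then show ?thesis
    by simp
qed

lemma leibniz_sum_Suc:
  fixes a b :: "nat \<Rightarrow> real"
  shows "(\<Sum>k\<le>Suc n. real (Suc n choose k) * a k * b (Suc n - k)) =
         (\<Sum>k\<le>n. real (n choose k) * (a (Suc k) * b (n - k) + a k * b (Suc (n - k))))"
proof -
  have shifted: "(\<Sum>k\<le>n. real (n choose k) * a k * b (Suc (n - k))) =
      a 0 * b (Suc n) + (\<Sum>k\<le>n. real (n choose Suc k) * a (Suc k) * b (n - k))"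
  proof -
    have "(\<Sum>k\<le>n. real (n choose k) * a k * b (Suc (n - k))) =
          (\<Sum>k\<le>Suc n. real (n choose k) * a k * b (Suc n - k))"
      by (simp add: Suc_diff_le)
    also have "\<dots> = a 0 * b (Suc n) + (\<Sum>k\<le>n. real (n choose Suc k) * a (Suc k) * b (n - k))"
      by (subst sum.atMost_Suc_shift) simp
    finally show ?thesis .
  qed
  have "(\<Sum>k\<le>Suc n. real (Suc n choose k) * a k * b (Suc n - k)) =
        a 0 * b (Suc n) + (\<Sum>k\<le>n. (real (n choose k) + real (n choose Suc k)) * a (Suc k) * b (n - k))"
    by (subst sum.atMost_Suc_shift) simp
  also have "\<dots> = (\<Sum>k\<le>n. real (n choose k) * a (Suc k) * b (n - k)) +
        (\<Sum>k\<le>n. real (n choose k) * a k * b (Suc (n - k)))"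
    by (simp add: shifted distrib_right sum.distrib)
  also have "\<dots> = (\<Sum>k\<le>n. real (n choose k) * (a (Suc k) * b (n - k) + a k * b (Suc (n - k))))"
    by (simp add: distrib_left sum.distrib mult.assoc)
  finally show ?thesis .
qed

lemma deriv_seq_add: "deriv_seq A \<Longrightarrow> deriv_seq B \<Longrightarrow> deriv_seq (seq_add A B)"
  unfolding deriv_seq_def seq_add_def by (auto intro!: derivative_eq_intros)

lemma deriv_seq_scale: "deriv_seq A \<Longrightarrow> deriv_seq (seq_scale c A)"
  unfolding deriv_seq_def seq_scale_def by (auto intro!: derivative_eq_intros)

lemma deriv_seq_shift:
  assumes "deriv_seq A" "c \<ge> 0"
  shows "deriv_seq (seq_shift c A)"
  unfolding deriv_seq_def seq_shift_def
proof (intro allI impI)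
  fix n and x :: real
  assume "x > 0"
  then have "(A n has_real_derivative A (Suc n) (x + c)) (at (x + c))"
    using assms unfolding deriv_seq_def by auto
  then show "((\<lambda>x. A n (x + c)) has_real_derivative A (Suc n) (x + c)) (at x)"
    using DERIV_shift[of "A n" "A (Suc n) (x + c)" x c] by (simp add: add.commute)
qed

lemma deriv_seq_mult:
  assumes "deriv_seq A" "deriv_seq B"
  shows "deriv_seq (seq_mult A B)"
  unfolding deriv_seq_def
proof (intro allI impI)
  fix n and x :: real
  assume "x > 0"
  then have dA: "\<And>k. (A k has_real_derivative A (Suc k) x) (at x)"
    and dB: "\<And>k. (B k has_real_derivative B (Suc k) x) (at x)"
    using assms unfolding deriv_seq_def by auto
  have "((\<lambda>x. \<Sum>k\<le>n. real (n choose k) * A k x * B (n - k) x) has_real_derivative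
      (\<Sum>k\<le>n. real (n choose k) * (A (Suc k) x * B (n - k) x + A k x * B (Suc (n - k)) x))) (at x)"
    by (rule derivative_eq_intros refl dA dB | simp add: algebra_simps)+
  then show "(seq_mult A B n has_real_derivative seq_mult A B (Suc n) x) (at x)"
    using leibniz_sum_Suc[of n "\<lambda>k. A k x" "\<lambda>k. B k x"] by (simp add: seq_mult_def[abs_def])
qed

lemma DERIV_inverse_power:
  assumes "x \<noteq> (0::real)"
  shows "((\<lambda>x. 1 / x ^ m) has_real_derivative - real m / x ^ Suc m) (at x)"
proof (cases m)
  case (Suc j)
  have "((\<lambda>x. inverse (x ^ m)) has_real_derivative
      - (inverse (x ^ m) * (real m * x ^ (m - Suc 0)) * inverse (x ^ m))) (at x)"
    by (rule DERIV_inverse'[OF DERIV_pow]) (use assms in simp)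
  moreover have "- (inverse (x ^ m) * (real m * x ^ (m - Suc 0)) * inverse (x ^ m)) = - real m / x ^ Suc m"
    using assms Suc by (simp add: field_simps)
  ultimately show ?thesis
    by (simp add: inverse_eq_divide)
qed simp

lemma deriv_seq_inverse_power: "deriv_seq (inverse_power_seq k)"
  unfolding deriv_seq_def
proof (intro allI impI)
  fix n and x :: real
  assume "x > 0"
  then have "((\<lambda>x. (-1) ^ n * pochhammer (real k) n * (1 / x ^ (k + n))) has_real_derivative
      (-1) ^ n * pochhammer (real k) n * (- real (k + n) / x ^ Suc (k + n))) (at x)"
    by (intro DERIV_cmult DERIV_inverse_power) simp
  moreover have "(-1) ^ n * pochhammer (real k) n * (- real (k + n) / x ^ Suc (k + n)) =
      inverse_power_seq k (Suc n) x"
    unfolding inverse_power_seq_def by (simp add: pochhammer_Suc field_simps)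
  ultimately show "(inverse_power_seq k n has_real_derivative inverse_power_seq k (Suc n) x) (at x)"
    unfolding inverse_power_seq_def[abs_def] by simp
qed

lemma deriv_seq_polygamma: "deriv_seq (polygamma_seq m)"
  unfolding deriv_seq_def polygamma_seq_def
proof (intro allI impI)
  fix n and x :: real
  assume "x > 0"
  then have "x \<notin> \<int>\<^sub>\<le>\<^sub>0"
    by (auto elim!: nonpos_Ints_cases)
  then show "((\<lambda>x. Polygamma (m + n) x) has_real_derivative Polygamma (m + Suc n) x) (at x)"
    using has_field_derivative_Polygamma[of x "m + n" UNIV] by simp
qed

lemma deriv_seq_eq_0:
  assumes "deriv_seq E" "\<And>x. x > 0 \<Longrightarrow> E 0 x = 0" "x > 0"
  shows "E n x = 0"
  using assms(3)
proof (induction n arbitrary: x)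
  case (Suc n)
  have "((\<lambda>y. 0) has_real_derivative 0) (at x)"
    by simp
  then have "(E n has_real_derivative 0) (at x)"
    by (rule has_field_derivative_transform_within_open[where S = "{0<..}"]) (use Suc in auto)
  moreover have "(E n has_real_derivative E (Suc n) x) (at x)"
    using assms(1) Suc.prems unfolding deriv_seq_def by auto
  ultimately show ?case
    using DERIV_unique by metis
qed (use assms(2) in auto)

lemma cm_seq_add: "cm_seq A \<Longrightarrow> cm_seq B \<Longrightarrow> cm_seq (seq_add A B)"
  unfolding cm_seq_def seq_add_def by (auto simp: distrib_left)

lemma cm_seq_scale: "cm_seq A \<Longrightarrow> c \<ge> 0 \<Longrightarrow> cm_seq (seq_scale c A)"
  unfolding cm_seq_def seq_scale_def by (auto simp: mult.left_commute[of "(-1)^_"])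

lemma cm_seq_shift: "cm_seq A \<Longrightarrow> c \<ge> 0 \<Longrightarrow> cm_seq (seq_shift c A)"
  unfolding cm_seq_def seq_shift_def by auto

lemma cm_seq_mult:
  assumes "cm_seq A" "cm_seq B"
  shows "cm_seq (seq_mult A B)"
  unfolding cm_seq_def
proof (intro allI impI)
  fix n and x :: real
  assume "x > 0"
  have "(-1) ^ n * seq_mult A B n x =
      (\<Sum>k\<le>n. real (n choose k) * ((-1) ^ k * A k x) * ((-1) ^ (n - k) * B (n - k) x))"
    unfolding seq_mult_def sum_distrib_left
  proof (rule sum.cong)
    fix k
    assume "k \<in> {..n}"
    then have "(-1::real) ^ n = (-1) ^ k * (-1) ^ (n - k)"
      by (simp flip: power_add)
    then show "(-1) ^ n * (real (n choose k) * A k x * B (n - k) x) =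
        real (n choose k) * ((-1) ^ k * A k x) * ((-1) ^ (n - k) * B (n - k) x)"
      by simp
  qed simp
  also have "\<dots> \<ge> 0"
    using assms \<open>x > 0\<close> unfolding cm_seq_def by (intro sum_nonneg) simp
  finally show "0 \<le> (-1) ^ n * seq_mult A B n x" .
qed

lemma cm_seq_inverse_power: "cm_seq (inverse_power_seq k)"
  unfolding cm_seq_def inverse_power_seq_def
  by (cases "k = 0")
    (auto intro!: divide_nonneg_pos pochhammer_nonneg simp: pochhammer_0_left simp flip: power_mult_distrib)

lemma vanishing_seq_add: "vanishing_seq A \<Longrightarrow> vanishing_seq B \<Longrightarrow> vanishing_seq (seq_add A B)"
  unfolding vanishing_seq_def seq_add_def by (auto intro!: tendsto_eq_intros)

lemma vanishing_seq_scale: "vanishing_seq A \<Longrightarrow> vanishing_seq (seq_scale c A)"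
  unfolding vanishing_seq_def seq_scale_def by (auto intro!: tendsto_eq_intros)

lemma vanishing_seq_shift:
  assumes "vanishing_seq A" "c \<ge> 0"
  shows "vanishing_seq (seq_shift c A)"
  unfolding vanishing_seq_def seq_shift_def
proof (intro allI impI)
  fix n and x :: real
  assume "x > 0"
  then have "(\<lambda>N. A n ((x + c) + real N)) \<longlonglongrightarrow> 0"
    using assms unfolding vanishing_seq_def by auto
  then show "(\<lambda>N. A n (x + real N + c)) \<longlonglongrightarrow> 0"
    by (simp add: ac_simps)
qed

lemma vanishing_seq_mult: "vanishing_seq A \<Longrightarrow> vanishing_seq B \<Longrightarrow> vanishing_seq (seq_mult A B)"
  unfolding vanishing_seq_def seq_mult_def
  by (auto intro!: tendsto_null_sum tendsto_mult_zero[OF tendsto_mult_right_zero])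

lemma vanishing_seq_inverse_power:
  assumes "k > 0"
  shows "vanishing_seq (inverse_power_seq k)"
  unfolding vanishing_seq_def inverse_power_seq_def
proof (intro allI impI)
  fix n and x :: real
  assume "x > 0"
  have "filterlim (\<lambda>N. x + real N) at_top sequentially"
    by (rule filterlim_tendsto_add_at_top[OF tendsto_const filterlim_real_sequentially])
  then have "filterlim (\<lambda>N. (x + real N) ^ (k + n)) at_top sequentially"
    using assms by (intro filterlim_pow_at_top) auto
  then have "(\<lambda>N. inverse ((x + real N) ^ (k + n))) \<longlonglongrightarrow> 0"
    by (rule tendsto_inverse_0_at_top)
  then show "(\<lambda>N. (-1) ^ n * pochhammer (real k) n / (x + real N) ^ (k + n)) \<longlonglongrightarrow> 0"
    by (auto simp: divide_inverse intro: tendsto_mult_right_zero)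
qed

lemma Polygamma_plus_real_tendsto_0:
  assumes "(x::real) > 0" "m > 0"
  shows "(\<lambda>N. Polygamma m (x + real N)) \<longlonglongrightarrow> 0"
proof -
  have "(\<lambda>k. inverse ((x + of_nat k) ^ Suc m)) sums ((-1) ^ Suc m * Polygamma m x / fact m)"
    using assms by (intro Polygamma_LIMSEQ) auto
  then have "(\<lambda>N. Polygamma m x + (-1) ^ m * fact m * (\<Sum>k<N. 1 / (x + of_nat k) ^ Suc m))
      \<longlonglongrightarrow> Polygamma m x + (-1) ^ m * fact m * ((-1) ^ Suc m * Polygamma m x / fact m)"
    unfolding sums_def by (intro tendsto_intros) (simp add: inverse_eq_divide)
  moreover have "Polygamma m x + (-1) ^ m * fact m * ((-1) ^ Suc m * Polygamma m x / fact m) = 0"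
    by (simp flip: power_add mult.assoc)
  moreover have "Polygamma m (x + real N) =
      Polygamma m x + (-1) ^ m * fact m * (\<Sum>k<N. 1 / (x + of_nat k) ^ Suc m)" for N
    using assms by (intro Polygamma_plus_of_nat) auto
  ultimately show ?thesis
    by simp
qed

lemma vanishing_seq_polygamma: "m > 0 \<Longrightarrow> vanishing_seq (polygamma_seq m)"
  unfolding vanishing_seq_def polygamma_seq_def by (auto intro!: Polygamma_plus_real_tendsto_0)

subsection \<open>The telescoping criterion\<close>

lemma cm_seq_of_forward_difference:
  assumes F: "deriv_seq F" "vanishing_seq F" and H: "deriv_seq H" "cm_seq H"
    and diff: "\<And>x. x > 0 \<Longrightarrow> F 0 x - F 0 (x + 1) = H 0 x"
  shows "cm_seq F"
  unfolding cm_seq_def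
proof (intro allI impI)
  fix n and x :: real
  assume x: "x > 0"
  have diff_n: "F n y - F n (y + 1) = H n y" if "y > 0" for y
  proof -
    let ?E = "seq_add F (seq_scale (-1) (seq_add (seq_shift 1 F) H))"
    have "deriv_seq ?E"
      using F(1) H(1) by (intro deriv_seq_add deriv_seq_scale deriv_seq_shift) auto
    moreover have "?E 0 z = 0" if "z > 0" for z
      using diff[OF that] by simp
    ultimately have "?E n y = 0"
      using deriv_seq_eq_0 \<open>y > 0\<close> by blast
    then show ?thesis
      by simp
  qed
  have telescope: "F n x = (\<Sum>k<N. H n (x + real k)) + F n (x + real N)" for N
  proof (induction N)
    case (Suc N)
    have "F n (x + real N) = H n (x + real N) + F n (x + real (Suc N))"
      using diff_n[of "x + real N"] x by (simp add: add.assoc add.commute[of 1])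
    with Suc.IH show ?case
      by simp
  qed simp
  have lim: "(\<lambda>N. (-1) ^ n * F n (x + real N)) \<longlonglongrightarrow> 0"
    using F(2) x unfolding vanishing_seq_def by (auto intro: tendsto_mult_right_zero)
  have bound: "(-1) ^ n * F n (x + real N) \<le> (-1) ^ n * F n x" for N
  proof -
    have "0 \<le> (\<Sum>k<N. (-1) ^ n * H n (x + real k))"
      using H(2) x unfolding cm_seq_def by (intro sum_nonneg) (auto simp: add_pos_nonneg)
    then show ?thesis
      using telescope[of N] by (simp add: distrib_left sum_distrib_left)
  qed
  show "0 \<le> (-1) ^ n * F n x"
    using bound by (intro LIMSEQ_le_const2[OF lim]) auto
qed

subsection \<open>Trigamma minus its asymptotic expansion\<close>

definition trigamma_approx :: "real \<Rightarrow> real" where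
  "trigamma_approx x = 1 / x + 1 / (2 * x^2) + 1 / (6 * x^3) - 1 / (30 * x^5)"

definition trigamma_remainder_seq :: "nat \<Rightarrow> real \<Rightarrow> real" where
  "trigamma_remainder_seq =
     seq_add (polygamma_seq 1) (seq_scale (-1)
       (seq_add (inverse_power_seq 1) (seq_add (seq_scale (1/2) (inverse_power_seq 2))
         (seq_add (seq_scale (1/6) (inverse_power_seq 3)) (seq_scale (-1/30) (inverse_power_seq 5))))))"

lemma trigamma_remainder_seq_0 [simp]:
  "trigamma_remainder_seq 0 x = Polygamma 1 x - trigamma_approx x"
  unfolding trigamma_remainder_seq_def trigamma_approx_def by (simp add: power2_eq_square)

lemma deriv_seq_trigamma_remainder: "deriv_seq trigamma_remainder_seq"
  unfolding trigamma_remainder_seq_def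
  by (intro deriv_seq_add deriv_seq_scale deriv_seq_polygamma deriv_seq_inverse_power)

lemma vanishing_seq_trigamma_remainder: "vanishing_seq trigamma_remainder_seq"
  unfolding trigamma_remainder_seq_def
  by (intro vanishing_seq_add vanishing_seq_scale vanishing_seq_polygamma vanishing_seq_inverse_power)
    simp_all

lemma Polygamma_1_plus1: "(x::real) > 0 \<Longrightarrow> Polygamma 1 x = Polygamma 1 (x + 1) + 1 / x^2"
  using Polygamma_plus1[of x 1] by (simp add: power2_eq_square)

lemma Polygamma_2_plus1: "(x::real) > 0 \<Longrightarrow> Polygamma 2 x = Polygamma 2 (x + 1) - 2 / x^3"
  using Polygamma_plus1[of x 2] by (simp add: numeral_eq_Suc)

lemma trigamma_approx_difference:
  assumes "x > 0"
  shows "1 / x^2 - trigamma_approx x + trigamma_approx (x + 1) =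
    1/30 * (1 / x^5 * (1 / (x + 1)^5)) + (1/6 * (1 / x^4 * (1 / (x + 1)^5)) +
    1/6 * (1 / x^3 * (1 / (x + 1)^5)))"
proof -
  have "u^2 - (u + 1/2 * u^2 + 1/6 * u^3 - 1/30 * u^5) + (v + 1/2 * v^2 + 1/6 * v^3 - 1/30 * v^5)
      = 1/30 * (u^5 * v^5) + (1/6 * (u^4 * v^5) + 1/6 * (u^3 * v^5))"
    if "x * u = 1" "(x + 1) * v = 1" for u v :: real
    using that by algebra
  from this[of "1 / x" "1 / (x + 1)"] assms show ?thesis
    unfolding trigamma_approx_def by (simp add: power_one_over)
qed

lemma cm_seq_trigamma_remainder: "cm_seq trigamma_remainder_seq"
proof -
  define H where "H =
    seq_add (seq_scale (1/30) (seq_mult (inverse_power_seq 5) (seq_shift 1 (inverse_power_seq 5))))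
      (seq_add (seq_scale (1/6) (seq_mult (inverse_power_seq 4) (seq_shift 1 (inverse_power_seq 5))))
        (seq_scale (1/6) (seq_mult (inverse_power_seq 3) (seq_shift 1 (inverse_power_seq 5)))))"
  have "deriv_seq H"
    unfolding H_def
    by (intro deriv_seq_add deriv_seq_scale deriv_seq_mult deriv_seq_shift deriv_seq_inverse_power)
      simp_all
  moreover have "cm_seq H"
    unfolding H_def
    by (intro cm_seq_add cm_seq_scale cm_seq_mult cm_seq_shift cm_seq_inverse_power) simp_all
  moreover have "trigamma_remainder_seq 0 x - trigamma_remainder_seq 0 (x + 1) = H 0 x"
    if "x > 0" for x
    using trigamma_approx_difference[OF that] Polygamma_1_plus1[OF that] unfolding H_def by simp
  ultimately show ?thesis
    by (rule cm_seq_of_forward_difference[OF deriv_seq_trigamma_remainder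
          vanishing_seq_trigamma_remainder])
qed

definition f0_seq :: "nat \<Rightarrow> real \<Rightarrow> real" where
  "f0_seq =
     seq_add (seq_mult (polygamma_seq 1) (polygamma_seq 1)) (seq_add (polygamma_seq 2)
       (seq_add (seq_scale (-1/12) (seq_mult (inverse_power_seq 2) (seq_shift 1 (inverse_power_seq 2))))
         (seq_scale (-1) (seq_mult (inverse_power_seq 4) (seq_shift 1 (inverse_power_seq 2))))))"

lemma f0_seq_0:
  assumes "x > 0"
  shows "f0_seq 0 x = f_lambda 0 x"
  using assms unfolding f0_seq_def f_lambda_def by (simp add: field_simps) algebra

lemma deriv_seq_f0: "deriv_seq f0_seq"
  unfolding f0_seq_def
  by (intro deriv_seq_add deriv_seq_scale deriv_seq_mult deriv_seq_shift deriv_seq_polygamma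
      deriv_seq_inverse_power) simp_all

lemma vanishing_seq_f0: "vanishing_seq f0_seq"
  unfolding f0_seq_def
  by (intro vanishing_seq_add vanishing_seq_scale vanishing_seq_mult vanishing_seq_shift
      vanishing_seq_polygamma vanishing_seq_inverse_power) simp_all

lemma f_lambda_0_difference:
  assumes "x > 0"
  shows "f_lambda 0 x - f_lambda 0 (x + 1) =
    2 * ((Polygamma 1 (x + 1) - trigamma_approx (x + 1)) * (1 / x^2)) +
    (11/15 * (1 / x^2 * (1 / (x + 1)^5 * (1 / (x + 2)^2))) +
    (12/5 * (1 / x * (1 / (x + 1)^5 * (1 / (x + 2)^2))) +
    (8/5 * (1 / (x + 1)^5 * (1 / (x + 2)^2)) + 5/3 * (1 / (x + 1)^4 * (1 / (x + 2)^2)))))"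
proof -
  have alg: "(a + u^2)^2 + (b - 2 * u^3) - (x^2 + 12) * (1/12) * u^4 * v^2
      - (a^2 + b - ((x + 1)^2 + 12) * (1/12) * v^4 * w^2)
    = 2 * ((a - (v + 1/2 * v^2 + 1/6 * v^3 - 1/30 * v^5)) * u^2) +
      (11/15 * (u^2 * (v^5 * w^2)) + (12/5 * (u * (v^5 * w^2)) +
      (8/5 * (v^5 * w^2) + 5/3 * (v^4 * w^2))))"
    if "x * u = 1" "(x + 1) * v = 1" "(x + 2) * w = 1" for u v w a b :: real
    using that by algebra
  have q0: "(x^2 + 0 * x + 12) / (12 * x^4 * (x + 1)^2) = (x^2 + 12) * (1/12) * (1 / x)^4 * (1 / (x + 1))^2"
    by (simp add: power_one_over)
  have q1: "((x + 1)^2 + 0 * (x + 1) + 12) / (12 * (x + 1)^4 * (x + 1 + 1)^2)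
      = ((x + 1)^2 + 12) * (1/12) * (1 / (x + 1))^4 * (1 / (x + 2))^2"
    by (simp add: power_one_over add.assoc)
  have "f_lambda 0 x - f_lambda 0 (x + 1) =
      (Polygamma 1 (x + 1) + (1 / x)^2)^2 + (Polygamma 2 (x + 1) - 2 * (1 / x)^3)
        - (x^2 + 12) * (1/12) * (1 / x)^4 * (1 / (x + 1))^2
      - ((Polygamma 1 (x + 1))^2 + Polygamma 2 (x + 1)
        - ((x + 1)^2 + 12) * (1/12) * (1 / (x + 1))^4 * (1 / (x + 2))^2)"
    unfolding f_lambda_def q0 q1 Polygamma_1_plus1[OF assms] Polygamma_2_plus1[OF assms]
    by (simp add: power_one_over)
  also have "\<dots> = 2 * ((Polygamma 1 (x + 1) - trigamma_approx (x + 1)) * (1 / x^2)) +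
    (11/15 * (1 / x^2 * (1 / (x + 1)^5 * (1 / (x + 2)^2))) +
    (12/5 * (1 / x * (1 / (x + 1)^5 * (1 / (x + 2)^2))) +
    (8/5 * (1 / (x + 1)^5 * (1 / (x + 2)^2)) + 5/3 * (1 / (x + 1)^4 * (1 / (x + 2)^2)))))"
    using alg[of "1 / x" "1 / (x + 1)" "1 / (x + 2)"] assms
    unfolding trigamma_approx_def by (simp add: power_one_over)
  finally show ?thesis .
qed

lemma cm_seq_f0: "cm_seq f0_seq"
proof -
  define M where "M = seq_mult (seq_shift 1 (inverse_power_seq 5)) (seq_shift 2 (inverse_power_seq 2))"
  define H where "H =
    seq_add (seq_scale 2 (seq_mult (seq_shift 1 trigamma_remainder_seq) (inverse_power_seq 2)))
      (seq_add (seq_scale (11/15) (seq_mult (inverse_power_seq 2) M))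
        (seq_add (seq_scale (12/5) (seq_mult (inverse_power_seq 1) M))
          (seq_add (seq_scale (8/5) M)
            (seq_scale (5/3) (seq_mult (seq_shift 1 (inverse_power_seq 4)) (seq_shift 2 (inverse_power_seq 2)))))))"
  have "deriv_seq H"
    unfolding H_def M_def
    by (intro deriv_seq_add deriv_seq_scale deriv_seq_mult deriv_seq_shift deriv_seq_inverse_power
        deriv_seq_trigamma_remainder) simp_all
  moreover have "cm_seq H"
    unfolding H_def M_def
    by (intro cm_seq_add cm_seq_scale cm_seq_mult cm_seq_shift cm_seq_inverse_power
        cm_seq_trigamma_remainder) simp_all
  moreover have "f0_seq 0 x - f0_seq 0 (x + 1) = H 0 x" if "x > 0" for x
    using f_lambda_0_difference[OF that] that unfolding H_def M_def by (simp add: f0_seq_0)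
  ultimately show ?thesis
    by (rule cm_seq_of_forward_difference[OF deriv_seq_f0 vanishing_seq_f0])
qed

lemma f_lambda_eq:
  assumes "x > 0"
  shows "f_lambda lam x = f_lambda 0 x + (- lam / 12) * (1 / x^3 * (1 / (x + 1)^2))"
  using assms unfolding f_lambda_def
  by (simp add: field_simps) algebra

lemma f_lambda_times_cube:
  assumes "x > 0"
  shows "x^3 * f_lambda lam x = (-37 * x - 24 * x^2 - lam) / (12 * (x + 1)^2) + 2 * Polygamma 1 (x + 1) * x
    + x^3 * ((Polygamma 1 (x + 1))^2 + Polygamma 2 (x + 1))"
proof -
  have alg: "x^3 * ((a + u^2)^2 + (b - 2 * u^3) - (x^2 + lam * x + 12) * (1/12) * u^4 * v^2)
      = (-37 * x - 24 * x^2 - lam) * (1/12) * v^2 + 2 * a * x + x^3 * (a^2 + b)"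
    if "x * u = 1" "(x + 1) * v = 1" for u v a b :: real
    using that by algebra
  have "(x^2 + lam * x + 12) / (12 * x^4 * (x + 1)^2)
      = (x^2 + lam * x + 12) * (1/12) * (1 / x)^4 * (1 / (x + 1))^2"
    by (simp add: power_one_over)
  then have f: "f_lambda lam x = (Polygamma 1 (x + 1) + (1 / x)^2)^2 + (Polygamma 2 (x + 1) - 2 * (1 / x)^3)
      - (x^2 + lam * x + 12) * (1/12) * (1 / x)^4 * (1 / (x + 1))^2"
    unfolding f_lambda_def Polygamma_1_plus1[OF assms] Polygamma_2_plus1[OF assms]
    by (simp add: power_one_over)
  have q: "(-37 * x - 24 * x^2 - lam) / (12 * (x + 1)^2)
      = (-37 * x - 24 * x^2 - lam) * (1/12) * (1 / (x + 1))^2"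
    by (simp add: power_one_over)
  show ?thesis
    unfolding f q using alg[of "1 / x" "1 / (x + 1)"] assms by simp
qed

lemma f_lambda_times_cube_tendsto: "((\<lambda>x. x^3 * f_lambda lam x) \<longlongrightarrow> - lam / 12) (at_right 0)"
proof -
  let ?g = "\<lambda>x. (-37 * x - 24 * x^2 - lam) / (12 * (x + 1)^2) + 2 * Polygamma 1 (x + 1) * x
    + x^3 * ((Polygamma 1 (x + 1))^2 + Polygamma 2 (x + 1))"
  have "(?g \<longlongrightarrow> ?g 0) (at_right 0)"
    by (intro tendsto_intros) auto
  moreover have "eventually (\<lambda>x. ?g x = x^3 * f_lambda lam x) (at_right 0)"
    using eventually_at_right_less[of 0] by eventually_elim (simp add: f_lambda_times_cube)
  ultimately show ?thesis
    by (simp add: tendsto_cong)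
qed

theorem theorem1p1:
  fixes lam :: real
  shows "completely_monotonic_on (f_lambda lam) {0<..} \<longleftrightarrow> lam \<le> 0"
proof
  assume cm: "completely_monotonic_on (f_lambda lam) {0<..}"
  have "eventually (\<lambda>x. 0 < x) (at_right (0::real))"
    by (rule eventually_at_right_less)
  then have "eventually (\<lambda>x. 0 \<le> x^3 * f_lambda lam x) (at_right 0)"
    by eventually_elim (intro mult_nonneg_nonneg completely_monotonic_on_nonneg[OF cm]; simp)
  then have "0 \<le> - lam / 12"
    by (rule tendsto_lowerbound[OF f_lambda_times_cube_tendsto]) simp
  then show "lam \<le> 0"
    by simp
next
  assume "lam \<le> 0"
  then have "0 \<le> - lam / 12"
    by simp
  define D where "D =
    seq_add f0_seq (seq_scale (- lam / 12) (seq_mult (inverse_power_seq 3) (seq_shift 1 (inverse_power_seq 2))))"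
  have "deriv_seq D"
    unfolding D_def
    by (intro deriv_seq_add deriv_seq_scale deriv_seq_mult deriv_seq_shift deriv_seq_inverse_power
        deriv_seq_f0) simp
  moreover have "cm_seq D"
    unfolding D_def
    by (intro cm_seq_add cm_seq_scale cm_seq_mult cm_seq_shift cm_seq_inverse_power cm_seq_f0
        \<open>0 \<le> - lam / 12\<close>) simp
  moreover have "D 0 x = f_lambda lam x" if "x > 0" for x
    using f_lambda_eq[OF that, of lam] that unfolding D_def by (simp add: f0_seq_0)
  ultimately show "completely_monotonic_on (f_lambda lam) {0<..}"
    by (rule completely_monotonic_on_seq)
qed

end
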